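(* Let $P=(U,R)$ be a partial order. Then $P$ is a linear order if and only if $NC(P)$ is a chain graph.
   Context: For $U=\{u_1,\dots,u_n\}$ and a disjoint copy $V=\{v_1,\dots,v_n\}$, $NC(P)=(U,V,E)$ is the bipartite graph with $u_iv_j\in E$ iff $u_i\le_P u_j$ (i.e. $u_i<_Pu_j$ or $i=j$). A bipartite graph is a chain graph if, for any two vertices in the same color class, one neighborhood contains the other. A linear order is a partial order in which every two distinct elements are comparable. *)

theory Defs
  imports Main
begin

text \<open>A bipartite graph (X, Y, E) with colour classes X and Y and edge set E \<subseteq> X \<times> Y.
  The two colour classes live in (possibly) separate types, so they are disjoint.\<close>
type_synonym ('a, 'b) bigraph = "'a set \<times> 'b set \<times> ('a \<times> 'b) set"

definition left_nbhd :: "('a, 'b) bigraph \<Rightarrow> 'a \<Rightarrow> 'b set" where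
  "left_nbhd G x = (case G of (X, Y, E) \<Rightarrow> {y \<in> Y. (x, y) \<in> E})"

definition right_nbhd :: "('a, 'b) bigraph \<Rightarrow> 'b \<Rightarrow> 'a set" where
  "right_nbhd G y = (case G of (X, Y, E) \<Rightarrow> {x \<in> X. (x, y) \<in> E})"

definition chain_graph :: "('a, 'b) bigraph \<Rightarrow> bool" where
  "chain_graph G = (case G of (X, Y, E) \<Rightarrow>
     E \<subseteq> X \<times> Y \<and>
     (\<forall>x1\<in>X. \<forall>x2\<in>X. left_nbhd G x1 \<subseteq> left_nbhd G x2 \<or> left_nbhd G x2 \<subseteq> left_nbhd G x1) \<and>
     (\<forall>y1\<in>Y. \<forall>y2\<in>Y. right_nbhd G y1 \<subseteq> right_nbhd G y2 \<or> right_nbhd G y2 \<subseteq> right_nbhd G y1))"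

text \<open>NC(P) for P = (U, R): colour class U (first component), a disjoint copy V of U
  (second component; v_j is represented by u_j itself, but in a separate colour class),
  and u_i v_j an edge iff u_i <_P u_j or i = j.\<close>
definition NC :: "'a set \<Rightarrow> 'a rel \<Rightarrow> ('a, 'a) bigraph" where
  "NC U R = (U, U, {(u, v). u \<in> U \<and> v \<in> U \<and> ((u, v) \<in> R \<or> u = v)})"

end

theory Submission
  imports Defs
begin

text \<open>In NC(P) the neighbourhood of u is its up-set and that of v is its down-set. For a
  preorder, inclusion of up-sets (or of down-sets) of two elements amounts to their
  comparability, so the neighbourhoods form chains exactly when the order is total.\<close>

lemma left_nbhd_NC:
  assumes "refl_on U R" "u \<in> U"
  shows "left_nbhd (NC U R) u = R `` {u} \<inter> U"
  using assms by (auto simp: left_nbhd_def NC_def refl_on_def)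

lemma right_nbhd_NC:
  assumes "refl_on U R" "v \<in> U"
  shows "right_nbhd (NC U R) v = R\<inverse> `` {v} \<inter> U"
  using assms by (auto simp: right_nbhd_def NC_def refl_on_def)

lemma Image_singleton_Int_subset_iff:
  assumes "refl_on U R" "trans R" "x \<in> U"
  shows "R `` {x} \<inter> U \<subseteq> R `` {y} \<inter> U \<longleftrightarrow> (y, x) \<in> R"
  using assms by (auto simp: refl_on_def dest: transD)

lemma chain_graph_NC_iff_total_on:
  assumes "preorder_on U R"
  shows "chain_graph (NC U R) \<longleftrightarrow> total_on U R"
proof -
  have refl: "refl_on U R" and tr: "trans R"
    using assms by (auto simp: preorder_on_def)
  have tr': "trans (R\<inverse>)" and refl': "refl_on U (R\<inverse>)"
    using tr refl by (simp_all add: refl_on_converse)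
  have comparable: "total_on U R \<longleftrightarrow> (\<forall>x\<in>U. \<forall>y\<in>U. (x, y) \<in> R \<or> (y, x) \<in> R)"
    using refl by (auto simp: total_on_def refl_on_def) metis
  have "chain_graph (NC U R) \<longleftrightarrow>
      (\<forall>x\<in>U. \<forall>y\<in>U. left_nbhd (NC U R) x \<subseteq> left_nbhd (NC U R) y \<or>
        left_nbhd (NC U R) y \<subseteq> left_nbhd (NC U R) x) \<and>
      (\<forall>x\<in>U. \<forall>y\<in>U. right_nbhd (NC U R) x \<subseteq> right_nbhd (NC U R) y \<or>
        right_nbhd (NC U R) y \<subseteq> right_nbhd (NC U R) x)"
    by (simp add: chain_graph_def NC_def) blast
  also have "\<dots> \<longleftrightarrow>
      (\<forall>x\<in>U. \<forall>y\<in>U. R `` {x} \<inter> U \<subseteq> R `` {y} \<inter> U \<or> R `` {y} \<inter> U \<subseteq> R `` {x} \<inter> U) \<and>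
      (\<forall>x\<in>U. \<forall>y\<in>U. R\<inverse> `` {x} \<inter> U \<subseteq> R\<inverse> `` {y} \<inter> U \<or>
        R\<inverse> `` {y} \<inter> U \<subseteq> R\<inverse> `` {x} \<inter> U)"
    by (simp add: left_nbhd_NC[OF refl] right_nbhd_NC[OF refl])
  also have "\<dots> \<longleftrightarrow> total_on U R"
    unfolding comparable
    using Image_singleton_Int_subset_iff[OF refl tr] Image_singleton_Int_subset_iff[OF refl' tr']
    by auto
  finally show ?thesis .
qed

theorem lemma9:
  fixes U :: "'a set" and R :: "'a rel"
  assumes "finite U" and "partial_order_on U R"
  shows "linear_order_on U R \<longleftrightarrow> chain_graph (NC U R)"
  using assms(2) chain_graph_NC_iff_total_on
  by (auto simp: linear_order_on_def partial_order_on_def)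

end
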